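(* Let $\mu$ be a positive Borel measure on $(0,\infty)$ such that $\mu((0,1))=0$ and $\sup_{n\in\mathbb{N}}\int_{1}^{\infty}t^{-(n+1)}\,d\mu(t)<\infty$, and set $\mu_n=\int_{1}^{\infty}\frac{1}{t^{n+1}}\,d\mu(t)$ for $n\in\mathbb{N}$. Then for every $p\in[1,\infty]$ and $\alpha>0$, the sequence $(\mu_n)$ is a coefficient multiplier of $F^p_\alpha$: if $f(z)=\sum_{n\ge0}a_nz^n\in F^p_\alpha$, then $\sum_{n\geq 0}\mu_n a_n z^n\in F^p_\alpha$.
   Context: $\mathbb{N}=\{0,1,2,\dots\}$. For $1\le p<\infty$ and $\alpha>0$, the Fock space $F^p_\alpha$ is the space of entire functions $f$ with $\|f\|_{p,\alpha}^p=\frac{\alpha p}{2\pi}\int_{\mathbb{C}}|f(z)e^{-\frac{\alpha}{2}|z|^2}|^p\,dA(z)<\infty$, where $dA$ is Lebesgue area measure; $F^\infty_\alpha$ is the space of entire functions $f$ with $\sup_{z\in\mathbb{C}}|f(z)|e^{-\frac{\alpha}{2}|z|^2}<\infty$. *)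

theory Defs
  imports "HOL-Analysis.Analysis"
begin

text \<open>Fock space F^p_alpha for p in [1,infinity] (p as an extended nonnegative real).
  The normalising constant alpha p/(2 pi) does not affect membership.\<close>
definition Fock_space :: "ennreal \<Rightarrow> real \<Rightarrow> (complex \<Rightarrow> complex) set" where
  "Fock_space p \<alpha> = {f. f holomorphic_on UNIV \<and>
     (if p = \<infinity> then (\<exists>C. \<forall>z. norm (f z) * exp (- (\<alpha> / 2) * (norm z)\<^sup>2) \<le> C)
      else (\<integral>\<^sup>+ z. ennreal ((norm (f z) * exp (- (\<alpha> / 2) * (norm z)\<^sup>2)) powr enn2real p) \<partial>lborel) < \<infinity>)}"

definition moment_seq :: "real measure \<Rightarrow> nat \<Rightarrow> real" where
  "moment_seq \<mu> n = enn2real (\<integral>\<^sup>+ t. ennreal (t powr (- real (n + 1))) * indicator {1..} t \<partial>\<mu>)"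

end

theory Submission
  imports Defs "HOL-Complex_Analysis.Complex_Analysis" "HOL-Probability.Probability"
begin

text \<open>Writing \<open>d\<nu>(t) = t\<^sup>-\<^sup>1 d\<mu>(t)\<close> on \<open>[1,\<infinity>)\<close>, a finite measure, the moments are
  \<open>\<mu>\<^sub>n = \<integral> t\<^sup>-\<^sup>n d\<nu>(t)\<close>, so integrating the power series of \<open>f\<close> termwise shows that
  \<open>\<Sum> \<mu>\<^sub>n a\<^sub>n z\<^sup>n\<close> is the average \<open>g(z) = \<integral> f(z/t) d\<nu>(t)\<close> of dilates of \<open>f\<close>.
  Dilation by \<open>t \<ge> 1\<close> does not increase the weighted sup norm, which settles \<open>p = \<infinity>\<close>.
  For \<open>p < \<infinity>\<close>, Jensen's inequality for the finite measure \<open>\<nu>\<close> and Tonelli reduce the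
  claim to a bound on the \<open>F\<^sup>p\<^sub>\<alpha>\<close> norms of the dilates \<open>f(\<cdot>/t)\<close> uniform in \<open>t \<ge> 1\<close>:
  for bounded \<open>t\<close> this is a change of variables, and for large \<open>t\<close> it follows from the
  growth estimate \<open>|f(z)| \<le> C exp(p\<alpha>|z|\<^sup>2)\<close>, a consequence of the area mean value
  inequality for \<open>|f|\<close>.\<close>

section \<open>An area mean value inequality\<close>

lemma nn_integral_lborel_complex_affine:
  fixes \<phi> :: "complex \<Rightarrow> ennreal" and c :: real and t :: complex
  assumes c: "c \<noteq> 0" and [measurable]: "\<phi> \<in> borel_measurable borel"
  shows "integral\<^sup>N lborel \<phi> = ennreal (c\<^sup>2) * (\<integral>\<^sup>+ x. \<phi> (t + c *\<^sub>R x) \<partial>lborel)"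
proof -
  have "integral\<^sup>N lborel \<phi> = integral\<^sup>N (density (distr lborel borel (\<lambda>x. t + c *\<^sub>R x)) (\<lambda>_. ennreal (\<bar>c\<bar> ^ DIM(complex)))) \<phi>"
    using lborel_affine[OF c, of t] by simp
  also have "\<dots> = \<integral>\<^sup>+ x. ennreal (\<bar>c\<bar> ^ DIM(complex)) * \<phi> x \<partial>(distr lborel borel (\<lambda>x. t + c *\<^sub>R x))"
    by (simp add: nn_integral_density)
  also have "\<dots> = \<integral>\<^sup>+ x. ennreal (\<bar>c\<bar> ^ DIM(complex)) * \<phi> (t + c *\<^sub>R x) \<partial>lborel"
    by (simp add: nn_integral_distr)
  also have "\<dots> = ennreal (c\<^sup>2) * (\<integral>\<^sup>+ x. \<phi> (t + c *\<^sub>R x) \<partial>lborel)"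
    by (simp add: nn_integral_cmult)
  finally show ?thesis .
qed

lemma nn_integral_reflect_translate_le:
  fixes \<phi> :: "complex \<Rightarrow> real"
  assumes [measurable]: "\<phi> \<in> borel_measurable borel" "B \<in> sets borel"
    and maps_into: "\<And>w. w \<in> S \<Longrightarrow> e - w \<in> B"
  shows "(\<integral>\<^sup>+ w. ennreal (\<phi> (e - w)) * indicator S w \<partial>lborel) \<le> (\<integral>\<^sup>+ v. ennreal (\<phi> v) * indicator B v \<partial>lborel)"
proof -
  have "(\<integral>\<^sup>+ w. ennreal (\<phi> (e - w)) * indicator S w \<partial>lborel)
      \<le> (\<integral>\<^sup>+ w. ennreal (\<phi> (e - w)) * indicator B (e - w) \<partial>lborel)"
    using maps_into by (intro nn_integral_mono) (auto split: split_indicator)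
  also have "\<dots> = (\<integral>\<^sup>+ v. ennreal (\<phi> v) * indicator B v \<partial>lborel)"
    using nn_integral_lborel_complex_affine[of "-1" "\<lambda>v. ennreal (\<phi> v) * indicator B v" e] by simp
  finally show ?thesis .
qed

lemma norm_le_shifted_circle_integral:
  fixes h :: "complex \<Rightarrow> complex" and w :: complex
  assumes h: "h holomorphic_on UNIV" and w: "norm w \<le> 1/2"
  shows "norm (h 0) \<le> 2 * integral {0..1} (\<lambda>t. norm (h (exp (2 * of_real pi * \<i> * of_real t) - w)))"
proof -
  define e where "e t = exp (2 * of_real pi * \<i> * of_real t)" for t :: real
  let ?g = "circlepath (- w) 1"
  have "((\<lambda>u. h u / (u - 0)) has_contour_integral (2 * of_real pi * \<i> * h 0)) ?g"
    by (rule Cauchy_integral_circlepath_simple) (use h w in \<open>auto intro: holomorphic_on_subset\<close>)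
  then have HI: "((\<lambda>x. h (?g x) / (?g x) * vector_derivative ?g (at x)) has_integral (2 * of_real pi * \<i> * h 0)) {0..1}"
    by (simp add: has_contour_integral)
  have vd: "vector_derivative ?g (at x) = complex_of_real (2 * pi) * \<i> * e x" for x
    unfolding e_def
    by (rule vector_derivative_at) (use has_vector_derivative_circlepath[of "-w" 1 x UNIV] in simp)
  have gx: "?g x = e x - w" for x
    by (simp add: circlepath e_def)
  have ne: "norm (e x) = 1" for x
    by (simp add: e_def norm_exp_eq_Re)
  have far: "1/2 \<le> norm (?g x)" for x
    using norm_triangle_ineq4[of "e x" w] norm_triangle_ineq2[of "e x" w] ne[of x] w by (simp add: gx)
  define G where "G x = 4 * pi * norm (h (e x - w))" for x
  have contG: "continuous_on {0..1} G"
    unfolding G_def e_def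
    by (intro continuous_intros continuous_on_compose2[OF holomorphic_on_imp_continuous_on[OF h]]) auto
  have bound: "norm (h (?g x) / (?g x) * vector_derivative ?g (at x)) \<le> G x" for x
  proof -
    have "norm (h (?g x) / (?g x) * vector_derivative ?g (at x)) = norm (h (?g x)) / norm (?g x) * (2 * pi)"
      by (simp add: vd norm_mult norm_divide ne)
    also have "\<dots> \<le> norm (h (?g x)) / (1/2) * (2 * pi)"
      using far[of x] by (intro mult_right_mono divide_left_mono) auto
    finally show ?thesis by (simp add: G_def gx mult_ac)
  qed
  have "norm (2 * of_real pi * \<i> * h 0) \<le> integral {0..1} G"
    using integral_norm_bound_integral[OF has_integral_integrable[OF HI] integrable_continuous_real[OF contG] bound]
      HI by (simp add: integral_unique)
  then have "2 * pi * norm (h 0) \<le> integral {0..1} G"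
    by (simp add: norm_mult)
  moreover have "integral {0..1} G = 4 * pi * integral {0..1} (\<lambda>x. norm (h (e x - w)))"
    unfolding G_def by simp
  ultimately show ?thesis
    by (simp add: mult_le_cancel_left_pos e_def)
qed

lemma norm_le_shifted_circle_nn_integral:
  fixes h :: "complex \<Rightarrow> complex" and w :: complex
  assumes h: "h holomorphic_on UNIV" and w: "norm w \<le> 1/2"
  shows "ennreal (norm (h 0)) \<le> 2 * (\<integral>\<^sup>+ t. ennreal (norm (h (exp (2 * of_real pi * \<i> * of_real t) - w))) * indicator {0..1} t \<partial>lborel)"
proof -
  let ?H = "\<lambda>t. norm (h (exp (2 * of_real pi * \<i> * of_real t) - w))"
  have "continuous_on {0..1} ?H"
    by (intro continuous_intros continuous_on_compose2[OF holomorphic_on_imp_continuous_on[OF h]]) auto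
  then have "(\<integral>\<^sup>+ t. ennreal (?H t) * indicator {0..1} t \<partial>lborel) = ennreal (integral {0..1} ?H)"
    by (intro nn_integral_has_integral_lebesgue' integrable_integral integrable_continuous_real) auto
  moreover have "ennreal (norm (h 0)) \<le> ennreal (2 * integral {0..1} ?H)"
    using norm_le_shifted_circle_integral[OF h w] by (rule ennreal_leI)
  ultimately show ?thesis
    by (simp add: ennreal_mult')
qed

lemma norm_le_averaged_circle_integral:
  fixes h :: "complex \<Rightarrow> complex" and S :: "complex set"
  assumes h: "h holomorphic_on UNIV" and [measurable]: "S \<in> sets borel" and S: "S \<subseteq> cball 0 (1/2)"
  shows "ennreal (norm (h 0)) * emeasure lborel S
    \<le> 2 * (\<integral>\<^sup>+ t. indicator {0..1} t * (\<integral>\<^sup>+ w. ennreal (norm (h (exp (2 * of_real pi * \<i> * of_real t) - w))) * indicator S w \<partial>lborel) \<partial>lborel)"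
proof -
  define e where "e t = exp (2 * of_real pi * \<i> * of_real t)" for t :: real
  have [measurable]: "h \<in> borel_measurable borel"
    using borel_measurable_continuous_onI holomorphic_on_imp_continuous_on[OF h] by blast
  have [measurable]: "e \<in> borel_measurable borel"
    unfolding e_def by (intro borel_measurable_continuous_onI continuous_intros)
  have "ennreal (norm (h 0)) * emeasure lborel S = (\<integral>\<^sup>+ w. ennreal (norm (h 0)) * indicator S w \<partial>lborel)"
    by (simp add: nn_integral_cmult_indicator)
  also have "\<dots> \<le> (\<integral>\<^sup>+ w. (2 * (\<integral>\<^sup>+ t. ennreal (norm (h (e t - w))) * indicator {0..1} t \<partial>lborel)) * indicator S w \<partial>lborel)"
    using norm_le_shifted_circle_nn_integral[OF h] S
    by (intro nn_integral_mono) (auto split: split_indicator simp: e_def)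
  also have "\<dots> = (\<integral>\<^sup>+ w. 2 * (\<integral>\<^sup>+ t. ennreal (norm (h (e t - w))) * indicator {0..1} t * indicator S w \<partial>lborel) \<partial>lborel)"
    by (intro nn_integral_cong) (subst nn_integral_multc, auto simp: mult.assoc)
  also have "\<dots> = 2 * (\<integral>\<^sup>+ w. (\<integral>\<^sup>+ t. ennreal (norm (h (e t - w))) * indicator {0..1} t * indicator S w \<partial>lborel) \<partial>lborel)"
    by (rule nn_integral_cmult) measurable
  also have "\<dots> = 2 * (\<integral>\<^sup>+ t. (\<integral>\<^sup>+ w. ennreal (norm (h (e t - w))) * indicator {0..1} t * indicator S w \<partial>lborel) \<partial>lborel)"
    by (subst lborel_pair.Fubini') auto
  also have "\<dots> = 2 * (\<integral>\<^sup>+ t. indicator {0..1} t * (\<integral>\<^sup>+ w. ennreal (norm (h (e t - w))) * indicator S w \<partial>lborel) \<partial>lborel)"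
    by (subst nn_integral_cmult[symmetric]) (auto simp: mult_ac)
  finally show ?thesis
    by (simp add: e_def)
qed

lemma norm_le_ball_integral:
  fixes h :: "complex \<Rightarrow> complex"
  assumes h: "h holomorphic_on UNIV"
  shows "ennreal (norm (h 0)) \<le> 8 * (\<integral>\<^sup>+ v. ennreal (norm (h v)) * indicator (ball 0 2) v \<partial>lborel)"
proof -
  define S where "S = cbox (Complex (-1/4) (-1/4)) (Complex (1/4) (1/4))"
  define e where "e t = exp (2 * of_real pi * \<i> * of_real t)" for t :: real
  define I where "I = (\<integral>\<^sup>+ v. ennreal (norm (h v)) * indicator (ball 0 2) v \<partial>lborel)"
  have [measurable]: "h \<in> borel_measurable borel"
    using borel_measurable_continuous_onI holomorphic_on_imp_continuous_on[OF h] by blast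
  have [measurable]: "S \<in> sets borel"
    by (simp add: S_def)
  have S_small: "S \<subseteq> cball 0 (1/2)"
  proof
    fix w assume "w \<in> S"
    then have "\<bar>Re w\<bar> \<le> 1/4" "\<bar>Im w\<bar> \<le> 1/4"
      by (auto simp: S_def mem_box Basis_complex_def)
    then show "w \<in> cball 0 (1/2)"
      using cmod_le[of w] by simp
  qed
  have inner: "(\<integral>\<^sup>+ w. ennreal (norm (h (e t - w))) * indicator S w \<partial>lborel) \<le> I" for t
    unfolding I_def
  proof (rule nn_integral_reflect_translate_le)
    show "e t - w \<in> ball 0 2" if "w \<in> S" for w
      using S_small that norm_triangle_ineq4[of "e t" w] by (auto simp: e_def norm_exp_eq_Re)
  qed measurable
  have "emeasure lborel S = ennreal (1/4)"
    unfolding S_def by (subst emeasure_lborel_cbox) (auto simp: Basis_complex_def)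
  then have "ennreal (norm (h 0)) * ennreal (1/4)
      \<le> 2 * (\<integral>\<^sup>+ t. indicator {0..1} t * (\<integral>\<^sup>+ w. ennreal (norm (h (e t - w))) * indicator S w \<partial>lborel) \<partial>lborel)"
    using norm_le_averaged_circle_integral[OF h _ S_small] by (simp add: e_def)
  also have "\<dots> \<le> 2 * (\<integral>\<^sup>+ t. indicator {0..1} (t::real) * I \<partial>lborel)"
    by (intro mult_left_mono nn_integral_mono inner) simp_all
  also have "\<dots> = 2 * I"
    by (simp add: nn_integral_cmult_indicator mult.commute)
  finally have quarter: "ennreal (norm (h 0)) * ennreal (1/4) \<le> 2 * I" .
  have "ennreal (norm (h 0)) = ennreal (norm (h 0)) * ennreal (1/4) * 4"
    by (simp add: mult.assoc ennreal_mult''[symmetric] flip: ennreal_numeral)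
  also have "\<dots> \<le> 2 * I * 4"
    by (intro mult_right_mono quarter) auto
  finally show ?thesis
    by (simp add: I_def mult_ac)
qed

section \<open>Growth and dilations of Fock space functions\<close>

lemma le_one_plus_weighted_powr:
  fixes x q s :: real
  assumes x: "0 \<le> x" and q: "1 \<le> q"
  shows "x \<le> 1 + (x * exp (- s)) powr q * exp (q * s)"
proof -
  have "x \<le> 1 + x powr q"
  proof (cases "x \<le> 1")
    case True
    then show ?thesis using x by (smt (verit) powr_ge_zero)
  next
    case False
    then have "x powr 1 \<le> x powr q" using q by (intro powr_mono) auto
    then show ?thesis using x by simp
  qed
  also have "x powr q = (x * exp (- s)) powr q * exp (q * s)"
  proof (cases "x = 0")
    case False
    then have "x > 0" using x by simp
    then show ?thesis
      by (simp add: powr_def ln_mult exp_add[symmetric] algebra_simps)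
  qed simp
  finally show ?thesis .
qed

lemma le_one_plus_Fock_weight_powr:
  fixes x q \<alpha> :: real and u z :: complex
  assumes x: "0 \<le> x" and q: "1 \<le> q" and alpha: "0 \<le> \<alpha>" and near: "norm u \<le> norm z + 2"
  shows "x \<le> 1 + (x * exp (- (\<alpha> / 2) * (norm u)\<^sup>2)) powr q * exp (q * \<alpha> * ((norm z)\<^sup>2 + 4))"
proof -
  define s where "s = (\<alpha> / 2) * (norm u)\<^sup>2"
  have "(norm u)\<^sup>2 \<le> (norm z + 2)\<^sup>2"
    using near by (intro power_mono) auto
  also have "(norm z + 2)\<^sup>2 \<le> 2 * ((norm z)\<^sup>2 + 4)"
  proof -
    have "0 \<le> (norm z - 2)\<^sup>2" by simp
    then show ?thesis unfolding power2_eq_square by (simp add: algebra_simps)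
  qed
  finally have "(\<alpha> / 2) * (norm u)\<^sup>2 \<le> (\<alpha> / 2) * (2 * ((norm z)\<^sup>2 + 4))"
    using alpha by (intro mult_left_mono) auto
  then have "s \<le> \<alpha> * ((norm z)\<^sup>2 + 4)"
    by (simp add: s_def algebra_simps)
  then have "q * s \<le> q * (\<alpha> * ((norm z)\<^sup>2 + 4))"
    using q by (intro mult_left_mono) auto
  then have "exp (q * s) \<le> exp (q * \<alpha> * ((norm z)\<^sup>2 + 4))"
    by (simp add: mult.assoc)
  have "x \<le> 1 + (x * exp (- s)) powr q * exp (q * s)"
    by (rule le_one_plus_weighted_powr[OF x q])
  also have "\<dots> \<le> 1 + (x * exp (- s)) powr q * exp (q * \<alpha> * ((norm z)\<^sup>2 + 4))"
    using \<open>exp (q * s) \<le> exp (q * \<alpha> * ((norm z)\<^sup>2 + 4))\<close> by (simp add: mult_left_mono)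
  finally show ?thesis
    by (simp add: s_def)
qed

lemma norm_le_local_Fock_integral:
  fixes f :: "complex \<Rightarrow> complex" and q \<alpha> :: real
  assumes f: "f holomorphic_on UNIV" and q: "1 \<le> q" and alpha: "0 \<le> \<alpha>"
  shows "ennreal (norm (f z)) \<le> 8 * (emeasure lborel (ball (0::complex) 2)
           + ennreal (exp (q * \<alpha> * ((norm z)\<^sup>2 + 4)))
             * (\<integral>\<^sup>+ u. ennreal ((norm (f u) * exp (- (\<alpha> / 2) * (norm u)\<^sup>2)) powr q) \<partial>lborel))"
proof -
  define E where "E = exp (q * \<alpha> * ((norm z)\<^sup>2 + 4))"
  define W where "W u = (norm (f u) * exp (- (\<alpha> / 2) * (norm u)\<^sup>2)) powr q" for u
  have [measurable]: "f \<in> borel_measurable borel" "ball (0::complex) 2 \<in> sets borel"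
    using borel_measurable_continuous_onI holomorphic_on_imp_continuous_on[OF f] by auto
  have hol: "(\<lambda>v. f (z + v)) holomorphic_on UNIV"
    by (rule holomorphic_on_compose_gen[of _ UNIV f, unfolded o_def]) (auto intro: holomorphic_intros f)
  have pointwise: "ennreal (norm (f (z + v))) * indicator (ball 0 2) v
      \<le> indicator (ball 0 2) v + ennreal E * ennreal (W (z + v))" for v
  proof (cases "v \<in> ball 0 2")
    case True
    then have near: "norm (z + v) \<le> norm z + 2"
      using norm_triangle_ineq[of z v] by simp
    have "norm (f (z + v)) \<le> 1 + W (z + v) * E"
      unfolding W_def E_def by (rule le_one_plus_Fock_weight_powr[OF norm_ge_zero q alpha near])
    then have "ennreal (norm (f (z + v))) \<le> ennreal (1 + W (z + v) * E)"
      by (rule ennreal_leI)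
    then show ?thesis
      using True by (simp add: E_def W_def ennreal_plus ennreal_mult mult.commute)
  qed simp
  have "ennreal (norm (f z)) \<le> 8 * (\<integral>\<^sup>+ v. ennreal (norm (f (z + v))) * indicator (ball 0 2) v \<partial>lborel)"
    using norm_le_ball_integral[OF hol] by simp
  also have "\<dots> \<le> 8 * (\<integral>\<^sup>+ v. indicator (ball 0 2) v + ennreal E * ennreal (W (z + v)) \<partial>lborel)"
    by (intro mult_left_mono nn_integral_mono pointwise) auto
  also have "\<dots> = 8 * (emeasure lborel (ball (0::complex) 2) + ennreal E * (\<integral>\<^sup>+ v. ennreal (W (z + v)) \<partial>lborel))"
    by (subst nn_integral_add) (auto simp: nn_integral_cmult W_def)
  also have "(\<integral>\<^sup>+ v. ennreal (W (z + v)) \<partial>lborel) = (\<integral>\<^sup>+ u. ennreal (W u) \<partial>lborel)"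
    using nn_integral_lborel_complex_affine[of 1 "\<lambda>u. ennreal (W u)" z] by (simp add: W_def)
  finally show ?thesis
    by (simp add: E_def W_def)
qed

lemma Fock_growth:
  fixes f :: "complex \<Rightarrow> complex" and q \<alpha> :: real
  assumes f: "f holomorphic_on UNIV" and q: "1 \<le> q" and alpha: "0 \<le> \<alpha>"
    and N: "(\<integral>\<^sup>+ z. ennreal ((norm (f z) * exp (- (\<alpha> / 2) * (norm z)\<^sup>2)) powr q) \<partial>lborel) < \<infinity>"
  shows "\<exists>C. \<forall>z. norm (f z) \<le> C * exp (q * \<alpha> * (norm z)\<^sup>2)"
proof -
  define NI where "NI = (\<integral>\<^sup>+ z. ennreal ((norm (f z) * exp (- (\<alpha> / 2) * (norm z)\<^sup>2)) powr q) \<partial>lborel)"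
  define N where "N = enn2real NI"
  have NI: "NI = ennreal N" "0 \<le> N"
    using N unfolding NI_def N_def by (auto simp: less_top[symmetric] ennreal_enn2real_if)
  define B where "B = measure lborel (ball (0::complex) 2)"
  have B: "emeasure lborel (ball (0::complex) 2) = ennreal B" "0 \<le> B"
    using emeasure_bounded_finite[of "ball (0::complex) 2"]
    by (simp_all add: B_def emeasure_eq_ennreal_measure)
  have "norm (f z) \<le> (8 * B + 8 * N * exp (4 * q * \<alpha>)) * exp (q * \<alpha> * (norm z)\<^sup>2)" for z
  proof -
    define ez where "ez = exp (q * \<alpha> * (norm z)\<^sup>2)"
    have E: "exp (q * \<alpha> * ((norm z)\<^sup>2 + 4)) = exp (4 * q * \<alpha>) * ez"
      by (simp add: ez_def algebra_simps flip: exp_add)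
    have "ennreal (norm (f z)) \<le> 8 * (emeasure lborel (ball (0::complex) 2) + ennreal (exp (4 * q * \<alpha>) * ez) * NI)"
      unfolding NI_def E[symmetric] by (rule norm_le_local_Fock_integral[OF f q alpha])
    also have "\<dots> = ennreal (8 * (B + exp (4 * q * \<alpha>) * ez * N))"
      using B NI by (simp add: ez_def ennreal_plus ennreal_mult)
    finally have "norm (f z) \<le> 8 * (B + exp (4 * q * \<alpha>) * ez * N)"
      using B NI by (subst (asm) ennreal_le_iff) (auto simp: ez_def)
    moreover have "B \<le> B * ez"
      using mult_left_mono[of 1 ez B] B q alpha by (simp add: ez_def)
    ultimately have "norm (f z) \<le> 8 * (B * ez + exp (4 * q * \<alpha>) * ez * N)"
      by simp
    also have "\<dots> = (8 * B + 8 * N * exp (4 * q * \<alpha>)) * ez"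
      by (simp add: algebra_simps)
    finally show ?thesis
      unfolding ez_def .
  qed
  then show ?thesis by blast
qed

lemma nn_integral_gaussian_finite:
  fixes c :: real
  assumes c: "0 < c"
  shows "(\<integral>\<^sup>+ x. ennreal (exp (- c * x\<^sup>2)) \<partial>lborel) < \<infinity>"
proof -
  define \<sigma> where "\<sigma> = sqrt (1 / (2 * c))"
  have \<sigma>: "0 < \<sigma>" "\<sigma>\<^sup>2 = 1 / (2 * c)"
    using c by (simp_all add: \<sigma>_def)
  define K where "K = sqrt (pi / c)"
  have K: "0 < K"
    using c by (simp add: K_def)
  have e1: "2 * pi * \<sigma>\<^sup>2 = pi / c" and e2: "2 * \<sigma>\<^sup>2 = 1 / c"
    using c by (simp_all add: \<sigma>)
  have eq: "exp (- c * x\<^sup>2) = K * normal_density 0 \<sigma> x" for x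
    using K c unfolding normal_density_def e1 e2 K_def by (simp add: field_simps)
  have "(\<integral>\<^sup>+ x. ennreal (exp (- c * x\<^sup>2)) \<partial>lborel) = (\<integral>\<^sup>+ x. ennreal K * ennreal (normal_density 0 \<sigma> x) \<partial>lborel)"
    by (intro nn_integral_cong, subst eq) (simp add: ennreal_mult K less_imp_le)
  also have "\<dots> = ennreal K * (\<integral>\<^sup>+ x. ennreal (normal_density 0 \<sigma> x) \<partial>lborel)"
    by (rule nn_integral_cmult) simp
  also have "(\<integral>\<^sup>+ x. ennreal (normal_density 0 \<sigma> x) \<partial>lborel) = 1"
    using \<sigma> by (subst nn_integral_eq_integral) auto
  finally show ?thesis by simp
qed

lemma nn_integral_complex_gaussian_finite:
  fixes c :: real
  assumes c: "0 < c"
  shows "(\<integral>\<^sup>+ z. ennreal (exp (- c * (norm z)\<^sup>2)) \<partial>(lborel :: complex measure)) < \<infinity>"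
proof -
  have "(\<integral>\<^sup>+ z. ennreal (exp (- c * (norm z)\<^sup>2)) \<partial>(lborel :: complex measure))
      = (\<integral>\<^sup>+ z. (\<Prod>b\<in>Basis. ennreal (exp (- c * (z \<bullet> b)\<^sup>2))) \<partial>(lborel :: complex measure))"
    by (intro nn_integral_cong) (simp add: Basis_complex_def cmod_power2 inner_complex_def ennreal_mult[symmetric] exp_add[symmetric] algebra_simps)
  also have "\<dots> = (\<Prod>b\<in>(Basis::complex set). (\<integral>\<^sup>+ x. ennreal (exp (- c * x\<^sup>2)) \<partial>lborel))"
    by (rule nn_integral_lborel_prod[where f = "\<lambda>b x. ennreal (exp (- c * x\<^sup>2))"]) auto
  also have "\<dots> < \<infinity>"
    using nn_integral_gaussian_finite[OF c] by (simp add: Basis_complex_def ennreal_mult_less_top)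
  finally show ?thesis .
qed

lemma Fock_integral_dilation_le:
  fixes f :: "complex \<Rightarrow> complex" and q \<alpha> t :: real
  assumes [measurable]: "f \<in> borel_measurable borel" and t: "1 \<le> t" and q: "0 \<le> q" and alpha: "0 \<le> \<alpha>"
  shows "(\<integral>\<^sup>+ z. ennreal ((norm (f (z / of_real t)) * exp (- (\<alpha> / 2) * (norm z)\<^sup>2)) powr q) \<partial>lborel)
    \<le> ennreal (t\<^sup>2) * (\<integral>\<^sup>+ z. ennreal ((norm (f z) * exp (- (\<alpha> / 2) * (norm z)\<^sup>2)) powr q) \<partial>lborel)"
proof -
  have [measurable]: "(\<lambda>z. ennreal ((norm (f (z / of_real t)) * exp (- (\<alpha> / 2) * (norm z)\<^sup>2)) powr q)) \<in> borel_measurable borel"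
    by measurable
  have "(\<integral>\<^sup>+ z. ennreal ((norm (f (z / of_real t)) * exp (- (\<alpha> / 2) * (norm z)\<^sup>2)) powr q) \<partial>lborel)
      = ennreal (t\<^sup>2) * (\<integral>\<^sup>+ x. ennreal ((norm (f ((0 + t *\<^sub>R x) / of_real t)) * exp (- (\<alpha> / 2) * (norm (0 + t *\<^sub>R x))\<^sup>2)) powr q) \<partial>lborel)"
    using t by (intro nn_integral_lborel_complex_affine) auto
  also have "\<dots> \<le> ennreal (t\<^sup>2) * (\<integral>\<^sup>+ x. ennreal ((norm (f x) * exp (- (\<alpha> / 2) * (norm x)\<^sup>2)) powr q) \<partial>lborel)"
  proof (intro mult_left_mono nn_integral_mono ennreal_leI)
    fix x :: complex
    have tx: "(0 + t *\<^sub>R x) / of_real t = x"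
      using t by (simp add: scaleR_conv_of_real)
    have nx: "(norm (0 + t *\<^sub>R x))\<^sup>2 = t\<^sup>2 * (norm x)\<^sup>2"
      using t by (simp add: power_mult_distrib)
    have "(norm x)\<^sup>2 \<le> t\<^sup>2 * (norm x)\<^sup>2"
      using t by (simp add: mult_le_cancel_right1 power_mono[of 1 t 2, simplified])
    then have "(\<alpha> / 2) * (norm x)\<^sup>2 \<le> (\<alpha> / 2) * (t\<^sup>2 * (norm x)\<^sup>2)"
      using alpha by (intro mult_left_mono) auto
    then have "exp (- (\<alpha> / 2) * (t\<^sup>2 * (norm x)\<^sup>2)) \<le> exp (- (\<alpha> / 2) * (norm x)\<^sup>2)"
      by simp
    then have "(norm (f x) * exp (- (\<alpha> / 2) * (t\<^sup>2 * (norm x)\<^sup>2))) powr q \<le> (norm (f x) * exp (- (\<alpha> / 2) * (norm x)\<^sup>2)) powr q"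
      using q by (intro powr_mono2 mult_left_mono) auto
    then show "(norm (f ((0 + t *\<^sub>R x) / of_real t)) * exp (- (\<alpha> / 2) * (norm (0 + t *\<^sub>R x))\<^sup>2)) powr q
        \<le> (norm (f x) * exp (- (\<alpha> / 2) * (norm x)\<^sup>2)) powr q"
      unfolding tx nx .
  qed simp
  finally show ?thesis .
qed

lemma weighted_norm_dilation_le_gaussian:
  fixes f :: "complex \<Rightarrow> complex" and q \<alpha> t C :: real
  assumes C: "\<And>z. norm (f z) \<le> C * exp (q * \<alpha> * (norm z)\<^sup>2)"
    and q: "0 < q" and alpha: "0 \<le> \<alpha>" and t: "4 * q \<le> t\<^sup>2"
  shows "norm (f (z / of_real t)) * exp (- (\<alpha> / 2) * (norm z)\<^sup>2) \<le> C * exp (- (\<alpha> / 4) * (norm z)\<^sup>2)"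
proof -
  have C0: "0 \<le> C"
    using C[of 0] by (smt (verit) norm_ge_zero exp_gt_zero mult_nonneg_nonneg zero_le_mult_iff)
  have "q * \<alpha> * (norm (z / of_real t))\<^sup>2 = (q / t\<^sup>2) * \<alpha> * (norm z)\<^sup>2"
    by (simp add: norm_divide power_divide)
  also have "\<dots> \<le> (1/4) * \<alpha> * (norm z)\<^sup>2"
  proof -
    have "q / t\<^sup>2 \<le> 1/4"
      using q t by (simp add: divide_simps)
    then show ?thesis
      using alpha by (intro mult_right_mono) auto
  qed
  finally have e: "q * \<alpha> * (norm (z / of_real t))\<^sup>2 \<le> (1/4) * \<alpha> * (norm z)\<^sup>2" .
  have "norm (f (z / of_real t)) * exp (- (\<alpha> / 2) * (norm z)\<^sup>2)
      \<le> C * exp (q * \<alpha> * (norm (z / of_real t))\<^sup>2) * exp (- (\<alpha> / 2) * (norm z)\<^sup>2)"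
    by (intro mult_right_mono C) auto
  also have "\<dots> = C * exp (q * \<alpha> * (norm (z / of_real t))\<^sup>2 + (- (\<alpha> / 2) * (norm z)\<^sup>2))"
    by (simp only: exp_add mult.assoc)
  also have "\<dots> \<le> C * exp (- (\<alpha> / 4) * (norm z)\<^sup>2)"
    using e C0 by (intro mult_left_mono) auto
  finally show ?thesis .
qed

lemma Fock_integral_dilation_le_gaussian:
  fixes f :: "complex \<Rightarrow> complex" and q \<alpha> t C :: real
  assumes [measurable]: "f \<in> borel_measurable borel"
    and C: "\<And>z. norm (f z) \<le> C * exp (q * \<alpha> * (norm z)\<^sup>2)"
    and q: "0 < q" and alpha: "0 \<le> \<alpha>" and t: "4 * q \<le> t\<^sup>2"
  shows "(\<integral>\<^sup>+ z. ennreal ((norm (f (z / of_real t)) * exp (- (\<alpha> / 2) * (norm z)\<^sup>2)) powr q) \<partial>lborel)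
    \<le> ennreal (C powr q) * (\<integral>\<^sup>+ z. ennreal (exp (- (q * \<alpha> / 4) * (norm z)\<^sup>2)) \<partial>(lborel :: complex measure))"
proof -
  have C0: "0 \<le> C"
    using C[of 0] by (smt (verit) norm_ge_zero exp_gt_zero mult_nonneg_nonneg zero_le_mult_iff)
  have pointwise: "ennreal ((norm (f (z / of_real t)) * exp (- (\<alpha> / 2) * (norm z)\<^sup>2)) powr q)
      \<le> ennreal (C powr q) * ennreal (exp (- (q * \<alpha> / 4) * (norm z)\<^sup>2))" for z
  proof -
    have "(norm (f (z / of_real t)) * exp (- (\<alpha> / 2) * (norm z)\<^sup>2)) powr q \<le> (C * exp (- (\<alpha> / 4) * (norm z)\<^sup>2)) powr q"
      using q by (intro powr_mono2 weighted_norm_dilation_le_gaussian[OF C q alpha t]) auto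
    also have "\<dots> = C powr q * exp (- (\<alpha> / 4) * (norm z)\<^sup>2) powr q"
      using C0 by (simp add: powr_mult)
    also have "exp (- (\<alpha> / 4) * (norm z)\<^sup>2) powr q = exp (- (q * \<alpha> / 4) * (norm z)\<^sup>2)"
      by (simp add: powr_def algebra_simps)
    finally show ?thesis
      by (simp add: ennreal_mult[symmetric] ennreal_leI)
  qed
  have "(\<integral>\<^sup>+ z. ennreal ((norm (f (z / of_real t)) * exp (- (\<alpha> / 2) * (norm z)\<^sup>2)) powr q) \<partial>lborel)
      \<le> (\<integral>\<^sup>+ z. ennreal (C powr q) * ennreal (exp (- (q * \<alpha> / 4) * (norm z)\<^sup>2)) \<partial>(lborel :: complex measure))"
    by (intro nn_integral_mono pointwise)
  also have "\<dots> = ennreal (C powr q) * (\<integral>\<^sup>+ z. ennreal (exp (- (q * \<alpha> / 4) * (norm z)\<^sup>2)) \<partial>(lborel :: complex measure))"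
    by (rule nn_integral_cmult) measurable
  finally show ?thesis .
qed

lemma Fock_integral_dilations_bounded:
  fixes f :: "complex \<Rightarrow> complex" and q \<alpha> :: real
  assumes f: "f holomorphic_on UNIV" and q: "1 \<le> q" and alpha: "0 < \<alpha>"
    and N: "(\<integral>\<^sup>+ z. ennreal ((norm (f z) * exp (- (\<alpha> / 2) * (norm z)\<^sup>2)) powr q) \<partial>lborel) < \<infinity>"
  shows "\<exists>K<\<infinity>. \<forall>t\<ge>1. (\<integral>\<^sup>+ z. ennreal ((norm (f (z / of_real t)) * exp (- (\<alpha> / 2) * (norm z)\<^sup>2)) powr q) \<partial>lborel) \<le> K"
proof -
  define NI where "NI = (\<integral>\<^sup>+ z. ennreal ((norm (f z) * exp (- (\<alpha> / 2) * (norm z)\<^sup>2)) powr q) \<partial>lborel)"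
  define G where "G = (\<integral>\<^sup>+ z. ennreal (exp (- (q * \<alpha> / 4) * (norm z)\<^sup>2)) \<partial>(lborel :: complex measure))"
  have [measurable]: "f \<in> borel_measurable borel"
    using borel_measurable_continuous_onI holomorphic_on_imp_continuous_on[OF f] by blast
  obtain C where C: "\<And>z. norm (f z) \<le> C * exp (q * \<alpha> * (norm z)\<^sup>2)"
    using Fock_growth[OF f q _ N] alpha by auto
  have "G < \<infinity>"
    unfolding G_def using q alpha by (intro nn_integral_complex_gaussian_finite) auto
  define K where "K = ennreal (4 * q) * NI + ennreal (C powr q) * G"
  have "K < \<infinity>"
    unfolding K_def using N \<open>G < \<infinity>\<close> by (simp add: NI_def ennreal_mult_less_top)
  moreover have "(\<integral>\<^sup>+ z. ennreal ((norm (f (z / of_real t)) * exp (- (\<alpha> / 2) * (norm z)\<^sup>2)) powr q) \<partial>lborel) \<le> K"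
    if t: "1 \<le> t" for t
  proof (cases "t\<^sup>2 \<le> 4 * q")
    case True
    have "(\<integral>\<^sup>+ z. ennreal ((norm (f (z / of_real t)) * exp (- (\<alpha> / 2) * (norm z)\<^sup>2)) powr q) \<partial>lborel)
        \<le> ennreal (t\<^sup>2) * NI"
      unfolding NI_def using t q alpha by (intro Fock_integral_dilation_le) auto
    also have "\<dots> \<le> ennreal (4 * q) * NI"
      using True by (intro mult_right_mono ennreal_leI) auto
    finally show ?thesis
      unfolding K_def by (rule order_trans) simp
  next
    case False
    have "(\<integral>\<^sup>+ z. ennreal ((norm (f (z / of_real t)) * exp (- (\<alpha> / 2) * (norm z)\<^sup>2)) powr q) \<partial>lborel)
        \<le> ennreal (C powr q) * G"
      unfolding G_def using False q alpha by (intro Fock_integral_dilation_le_gaussian C) auto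
    then show ?thesis
      unfolding K_def by (rule order_trans) simp
  qed
  ultimately show ?thesis by blast
qed

section \<open>Jensen's inequality for powers\<close>

lemma Young_inequality_powr:
  fixes v q :: real
  assumes v: "0 \<le> v" and q: "1 \<le> q"
  shows "v \<le> v powr q / q + (1 - 1 / q)"
proof (cases "v = 0")
  case False
  then have "0 < v" using v by simp
  have "(v powr q) powr (1/q) * 1 powr (1 - 1/q) \<le> (1/q) * v powr q + (1 - 1/q) * 1"
    using q \<open>0 < v\<close> by (intro Youngs_inequality_0) (auto simp: divide_simps)
  moreover have "(v powr q) powr (1/q) = v"
    using q \<open>0 < v\<close> by (simp add: powr_powr)
  ultimately show ?thesis by simp
qed (use q in simp)

lemma nn_integral_le_Young:
  fixes u :: "'a \<Rightarrow> real" and q r :: real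
  assumes [measurable]: "u \<in> borel_measurable M" and u: "\<And>x. 0 \<le> u x" and q: "1 \<le> q" and r: "0 < r"
  shows "(\<integral>\<^sup>+ x. ennreal (u x) \<partial>M)
    \<le> ennreal (r powr (1 - q) / q) * (\<integral>\<^sup>+ x. ennreal (u x powr q) \<partial>M)
       + ennreal ((1 - 1 / q) * r) * emeasure M (space M)"
proof -
  define A where "A = r powr (1 - q) / q"
  define B where "B = (1 - 1 / q) * r"
  have AB: "0 \<le> A" "0 \<le> B"
    using q r by (auto simp: A_def B_def divide_simps)
  have "u x \<le> A * u x powr q + B" for x
  proof -
    have "u x / r \<le> (u x / r) powr q / q + (1 - 1 / q)"
      using u[of x] r q by (intro Young_inequality_powr) auto
    then have "r * (u x / r) \<le> r * ((u x / r) powr q / q + (1 - 1 / q))"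
      using r by (intro mult_left_mono) auto
    also have "\<dots> = A * u x powr q + B"
      using u[of x] r q by (simp add: A_def B_def powr_divide powr_diff field_simps)
    finally show ?thesis
      using r by simp
  qed
  then have "(\<integral>\<^sup>+ x. ennreal (u x) \<partial>M) \<le> (\<integral>\<^sup>+ x. ennreal A * ennreal (u x powr q) + ennreal B \<partial>M)"
    using AB by (intro nn_integral_mono) (simp add: ennreal_leI flip: ennreal_mult ennreal_plus)
  also have "\<dots> = ennreal A * (\<integral>\<^sup>+ x. ennreal (u x powr q) \<partial>M) + ennreal B * emeasure M (space M)"
    by (subst nn_integral_add) (auto simp: nn_integral_cmult)
  finally show ?thesis
    by (simp add: A_def B_def)
qed

lemma powr_nn_integral_le_nondegenerate:
  fixes u :: "'a \<Rightarrow> real" and q m j :: real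
  assumes [measurable]: "u \<in> borel_measurable M" and u: "\<And>x. 0 \<le> u x" and q: "1 \<le> q"
    and m: "0 < m" "emeasure M (space M) = ennreal m"
    and j: "(\<integral>\<^sup>+ x. ennreal (u x powr q) \<partial>M) = ennreal j" "0 < j"
  shows "ennreal (enn2real (\<integral>\<^sup>+ x. ennreal (u x) \<partial>M) powr q) \<le> ennreal (m powr (q - 1)) * ennreal j"
proof -
  define r where "r = (j / m) powr (1 / q)"
  have r: "0 < r" "r powr q = j / m"
    using j m q by (simp_all add: r_def powr_powr)
  \<comment> \<open>This choice of \<open>r\<close> makes both terms of Young's inequality multiples of \<open>r m\<close>.\<close>
  define A where "A = r powr (1 - q) / q"
  define B where "B = (1 - 1 / q) * r"
  have AB: "0 \<le> A" "0 \<le> B"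
    using q r by (auto simp: A_def B_def divide_simps)
  have "(\<integral>\<^sup>+ x. ennreal (u x) \<partial>M) \<le> ennreal A * ennreal j + ennreal B * ennreal m"
    unfolding A_def B_def j(1)[symmetric] m(2)[symmetric] using u q r by (intro nn_integral_le_Young) auto
  also have "\<dots> = ennreal (A * j) + ennreal (B * m)"
    using j AB m by (simp add: ennreal_mult)
  also have "\<dots> = ennreal (A * j + B * m)"
    by (intro ennreal_plus[symmetric] mult_nonneg_nonneg) (use AB j m in auto)
  also have "A * j + B * m = r * m"
    using r m q by (simp add: A_def B_def powr_diff field_simps)
  finally have "enn2real (\<integral>\<^sup>+ x. ennreal (u x) \<partial>M) \<le> r * m"
    using r m by (intro enn2real_leI) auto
  then have "enn2real (\<integral>\<^sup>+ x. ennreal (u x) \<partial>M) powr q \<le> (r * m) powr q"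
    using q by (intro powr_mono2) auto
  also have "\<dots> = m powr (q - 1) * j"
    using r m by (simp add: powr_mult powr_diff)
  finally show ?thesis
    using j by (simp add: ennreal_leI flip: ennreal_mult)
qed

lemma powr_nn_integral_le:
  fixes u :: "'a \<Rightarrow> real" and q :: real
  assumes fin: "finite_measure M" and [measurable]: "u \<in> borel_measurable M"
    and u: "\<And>x. 0 \<le> u x" and q: "1 \<le> q"
  shows "ennreal (enn2real (\<integral>\<^sup>+ x. ennreal (u x) \<partial>M) powr q)
     \<le> ennreal (measure M (space M) powr (q - 1)) * (\<integral>\<^sup>+ x. ennreal (u x powr q) \<partial>M)"
proof -
  interpret finite_measure M by (rule fin)
  define m where "m = measure M (space M)"
  define I where "I = (\<integral>\<^sup>+ x. ennreal (u x) \<partial>M)"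
  define J where "J = (\<integral>\<^sup>+ x. ennreal (u x powr q) \<partial>M)"
  have space: "emeasure M (space M) = ennreal m" "0 \<le> m"
    by (simp_all add: m_def emeasure_eq_measure)
  have I_zero: "I = 0" if "m = 0 \<or> J = 0"
  proof -
    have "AE x in M. ennreal (u x powr q) = 0"
      using that space by (auto intro: emeasure_0_AE simp: J_def nn_integral_0_iff_AE)
    then have "AE x in M. ennreal (u x) = 0"
      by eventually_elim (use u in simp)
    then show ?thesis
      unfolding I_def by (simp add: nn_integral_0_iff_AE)
  qed
  show ?thesis
  proof (cases "I = 0")
    case True
    then show ?thesis using q by (simp add: I_def)
  next
    case False
    then have m: "0 < m" and "J \<noteq> 0"
      using I_zero space by force+
    show ?thesis
    proof (cases "J = \<infinity>")
      case True
      then show ?thesis using m by (simp add: J_def m_def ennreal_mult_top)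
    next
      case False
      define j where "j = enn2real J"
      have J: "J = ennreal j" "0 < j"
        using False \<open>J \<noteq> 0\<close> by (auto simp: j_def less_top ennreal_enn2real_if enn2real_positive_iff zero_less_iff_neq_zero)
      have "ennreal (enn2real I powr q) \<le> ennreal (m powr (q - 1)) * ennreal j"
        unfolding I_def using u q m space J by (intro powr_nn_integral_le_nondegenerate) (auto simp: J_def)
      then show ?thesis
        using J by (simp add: I_def J_def m_def)
    qed
  qed
qed

section \<open>Averages of dilates\<close>

lemma summable_norm_entire_power_series:
  fixes a :: "nat \<Rightarrow> complex"
  assumes "\<And>z. (\<lambda>n. a n * z ^ n) sums f z"
  shows "summable (\<lambda>n. norm (a n * z ^ n))"
proof -
  have "summable (\<lambda>n. a n * (of_real (norm z + 1)) ^ n)"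
    using assms[of "of_real (norm z + 1)"] by (simp add: sums_iff)
  moreover have "norm z < norm (complex_of_real (norm z + 1))"
    by simp
  ultimately show ?thesis by (rule powser_insidea)
qed

lemma abs_indicator_inverse_power_le:
  fixes t :: real
  shows "\<bar>indicator {1..} t * (1 / t) ^ n\<bar> \<le> 1"
proof (cases "1 \<le> t")
  case True
  then have "(1 / t) ^ n \<le> 1" "0 \<le> (1 / t) ^ n"
    by (auto intro: power_le_one)
  then show ?thesis
    using True by simp
qed simp

definition dilation_mean :: "real measure \<Rightarrow> (complex \<Rightarrow> complex) \<Rightarrow> complex \<Rightarrow> complex" where
  "dilation_mean \<nu> f z = (\<integral> t. indicator {1..} t *\<^sub>R f (z / of_real t) \<partial>\<nu>)"

lemma norm_dilation_mean_le:
  "norm (dilation_mean \<nu> f z) \<le> (\<integral> t. indicator {1..} t * norm (f (z / of_real t)) \<partial>\<nu>)"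
  using integral_norm_bound[of \<nu> "\<lambda>t. indicator {1..} t *\<^sub>R f (z / of_real t)"]
  by (simp add: dilation_mean_def indicator_def)

context
  fixes \<nu> :: "real measure"
  assumes finite_nu: "finite_measure \<nu>" and sets_nu [measurable_cong]: "sets \<nu> = sets borel"
begin

lemma integrable_dilation:
  fixes f :: "complex \<Rightarrow> complex"
  assumes f: "continuous_on UNIV f"
  shows "integrable \<nu> (\<lambda>t. indicator {1..} t *\<^sub>R f (z / of_real t))"
proof -
  interpret finite_measure \<nu> by (rule finite_nu)
  have [measurable]: "f \<in> borel_measurable borel"
    using f by (rule borel_measurable_continuous_onI)
  have "bounded (f ` cball 0 (norm z))"
    by (intro compact_imp_bounded compact_continuous_image continuous_on_subset[OF f]) auto
  then obtain B where B: "\<forall>x\<in>cball 0 (norm z). norm (f x) \<le> B"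
    by (auto simp: bounded_iff)
  have "norm (indicator {1..} t *\<^sub>R f (z / of_real t)) \<le> max 0 B" for t :: real
  proof (cases "1 \<le> t")
    case True
    then have "z / of_real t \<in> cball 0 (norm z)"
      by (simp add: norm_divide divide_le_eq mult_le_cancel_left1)
    then show ?thesis using True B by fastforce
  qed simp
  then show ?thesis
    by (intro integrable_const_bound[where B = "max 0 B"]) auto
qed

lemma integrable_norm_dilation:
  fixes f :: "complex \<Rightarrow> complex"
  assumes "continuous_on UNIV f"
  shows "integrable \<nu> (\<lambda>t. indicator {1..} t * norm (f (z / of_real t)))"
  using integrable_norm[OF integrable_dilation[OF assms, of z]] by (simp add: indicator_def)

lemma dilation_mean_sums:
  fixes f :: "complex \<Rightarrow> complex" and a :: "nat \<Rightarrow> complex"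
  assumes a: "\<And>z. (\<lambda>n. a n * z ^ n) sums f z"
  shows "(\<lambda>n. complex_of_real (\<integral> t. indicator {1..} t * (1 / t) ^ n \<partial>\<nu>) * a n * z ^ n) sums dilation_mean \<nu> f z"
proof -
  interpret finite_measure \<nu> by (rule finite_nu)
  have abs_summable: "summable (\<lambda>n. norm (a n * z ^ n))"
    using a by (rule summable_norm_entire_power_series)
  define F where "F n t = (a n * z ^ n) * complex_of_real (indicator {1..} t * (1 / t) ^ n)" for n and t :: real
  have F_le: "norm (F n t) \<le> norm (a n * z ^ n)" for n t
    unfolding F_def norm_mult[of "a n * z ^ n"] norm_of_real
    by (intro mult_left_le abs_indicator_inverse_power_le) auto
  have [measurable]: "F n \<in> borel_measurable \<nu>" for n
    unfolding F_def by measurable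
  have F_int: "integrable \<nu> (F n)" for n
    by (rule integrable_const_bound[where B = "norm (a n * z ^ n)"]) (auto simp: F_le)
  have AE_summable: "AE t in \<nu>. summable (\<lambda>n. norm (F n t))"
    by (intro AE_I2 summable_comparison_test'[OF abs_summable, of 0]) (simp add: F_le)
  have summable_integral: "summable (\<lambda>n. \<integral> t. norm (F n t) \<partial>\<nu>)"
  proof (rule summable_comparison_test'[OF summable_mult2[OF abs_summable, of "measure \<nu> (space \<nu>)"], of 0])
    fix n :: nat
    have "(\<integral> t. norm (F n t) \<partial>\<nu>) \<le> (\<integral> t. norm (a n * z ^ n) \<partial>\<nu>)"
      by (intro integral_mono integrable_norm F_int) (auto simp: F_le)
    then show "norm (\<integral> t. norm (F n t) \<partial>\<nu>) \<le> norm (a n * z ^ n) * measure \<nu> (space \<nu>)"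
      by (simp add: integral_nonneg_AE mult.commute)
  qed
  have F_sum: "(\<Sum>n. F n t) = indicator {1..} t *\<^sub>R f (z / of_real t)" for t
  proof (cases "1 \<le> t")
    case True
    have "F n t = a n * (z / of_real t) ^ n" for n
      using True by (simp add: F_def power_divide divide_inverse of_real_power power_inverse power_mult_distrib)
    then show ?thesis
      using True sums_unique[OF a[of "z / of_real t"]] by simp
  qed (simp add: F_def)
  have F_integral: "(\<integral> t. F n t \<partial>\<nu>) = complex_of_real (\<integral> t. indicator {1..} t * (1 / t) ^ n \<partial>\<nu>) * a n * z ^ n" for n
    unfolding F_def integral_mult_right_zero integral_complex_of_real by (simp add: mult_ac)
  show ?thesis
    using sums_integral[OF F_int AE_summable summable_integral]
    unfolding F_sum F_integral dilation_mean_def .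
qed

lemma holomorphic_dilation_mean:
  fixes f :: "complex \<Rightarrow> complex" and a :: "nat \<Rightarrow> complex"
  assumes "\<And>z. (\<lambda>n. a n * z ^ n) sums f z"
  shows "dilation_mean \<nu> f holomorphic_on UNIV"
proof -
  define c where "c n = complex_of_real (\<integral> t. indicator {1..} t * (1 / t) ^ n \<partial>\<nu>) * a n" for n
  have sums: "(\<lambda>n. c n * z ^ n) sums dilation_mean \<nu> f z" for z
    unfolding c_def using dilation_mean_sums[OF assms] .
  then have "dilation_mean \<nu> f = (\<lambda>z. \<Sum>n. c n * z ^ n)"
    by (auto simp: sums_iff)
  then show ?thesis
    using termdiffs_strong_converges_everywhere[of c] sums
    by (auto simp: holomorphic_on_def field_differentiable_def sums_iff)
qed

lemma weighted_norm_dilation_mean_le: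
  fixes f :: "complex \<Rightarrow> complex" and \<alpha> C :: real
  assumes f: "continuous_on UNIV f" and alpha: "0 \<le> \<alpha>"
    and C: "\<And>u. norm (f u) * exp (- (\<alpha> / 2) * (norm u)\<^sup>2) \<le> C"
  shows "norm (dilation_mean \<nu> f z) * exp (- (\<alpha> / 2) * (norm z)\<^sup>2) \<le> measure \<nu> (space \<nu>) * C"
proof -
  interpret finite_measure \<nu> by (rule finite_nu)
  define w where "w = exp ((\<alpha> / 2) * (norm z)\<^sup>2)"
  have C0: "0 \<le> C"
    using C[of 0] by (smt (verit) norm_ge_zero exp_gt_zero mult_nonneg_nonneg)
  have "indicator {1..} t * norm (f (z / of_real t)) \<le> C * w" for t :: real
  proof (cases "1 \<le> t")
    case True
    have "norm (z / of_real t) \<le> norm z"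
      using True by (simp add: norm_divide divide_le_eq mult_le_cancel_left1)
    then have "exp ((\<alpha> / 2) * (norm (z / of_real t))\<^sup>2) \<le> w"
      unfolding w_def using alpha by (simp add: mult_left_mono power_mono)
    have "norm (f u) \<le> C * exp ((\<alpha> / 2) * (norm u)\<^sup>2)" for u
      using C[of u] by (simp add: exp_minus field_simps)
    then have "norm (f (z / of_real t)) \<le> C * exp ((\<alpha> / 2) * (norm (z / of_real t))\<^sup>2)" .
    also have "\<dots> \<le> C * w"
      using \<open>exp ((\<alpha> / 2) * (norm (z / of_real t))\<^sup>2) \<le> w\<close> C0 by (rule mult_left_mono)
    finally show ?thesis
      using True by simp
  qed (simp add: w_def C0)
  then have "(\<integral> t. indicator {1..} t * norm (f (z / of_real t)) \<partial>\<nu>) \<le> measure \<nu> (space \<nu>) * (C * w)"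
    using integral_mono[OF integrable_norm_dilation[OF f] integrable_const, of z "C * w"] by simp
  then have "norm (dilation_mean \<nu> f z) \<le> measure \<nu> (space \<nu>) * C * w"
    using norm_dilation_mean_le[of \<nu> f z] by (simp add: mult.assoc)
  then show ?thesis
    by (simp add: w_def exp_minus field_simps)
qed

lemma powr_weighted_norm_dilation_mean_le:
  fixes f :: "complex \<Rightarrow> complex" and q c :: real
  assumes f: "continuous_on UNIV f" and q: "1 \<le> q" and c: "0 \<le> c"
  shows "ennreal ((norm (dilation_mean \<nu> f z) * c) powr q)
    \<le> ennreal (measure \<nu> (space \<nu>) powr (q - 1))
        * (\<integral>\<^sup>+ t. ennreal ((indicator {1..} t * norm (f (z / of_real t)) * c) powr q) \<partial>\<nu>)"
proof -
  have [measurable]: "f \<in> borel_measurable borel"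
    using f by (rule borel_measurable_continuous_onI)
  define I where "I = (\<integral> t. indicator {1..} t * norm (f (z / of_real t)) \<partial>\<nu>)"
  have "(\<integral>\<^sup>+ t. ennreal (indicator {1..} t * norm (f (z / of_real t)) * c) \<partial>\<nu>)
      = (\<integral>\<^sup>+ t. ennreal (indicator {1..} t * norm (f (z / of_real t))) * ennreal c \<partial>\<nu>)"
    using c by (intro nn_integral_cong) (simp add: ennreal_mult[symmetric])
  also have "\<dots> = ennreal I * ennreal c"
    unfolding I_def
    by (simp add: nn_integral_multc nn_integral_eq_integral[OF integrable_norm_dilation[OF f]])
  finally have "enn2real (\<integral>\<^sup>+ t. ennreal (indicator {1..} t * norm (f (z / of_real t)) * c) \<partial>\<nu>) = I * c"
    using c by (simp add: I_def ennreal_mult[symmetric] integral_nonneg_AE)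
  moreover have "norm (dilation_mean \<nu> f z) * c \<le> I * c"
    unfolding I_def using c by (intro mult_right_mono norm_dilation_mean_le)
  ultimately have "ennreal ((norm (dilation_mean \<nu> f z) * c) powr q)
      \<le> ennreal ((enn2real (\<integral>\<^sup>+ t. ennreal (indicator {1..} t * norm (f (z / of_real t)) * c) \<partial>\<nu>)) powr q)"
    using q c by (intro ennreal_leI powr_mono2) auto
  also have "\<dots> \<le> ennreal (measure \<nu> (space \<nu>) powr (q - 1))
        * (\<integral>\<^sup>+ t. ennreal ((indicator {1..} t * norm (f (z / of_real t)) * c) powr q) \<partial>\<nu>)"
    using q c by (intro powr_nn_integral_le finite_nu) auto
  finally show ?thesis .
qed

lemma Fock_integral_dilation_mean_finite:
  fixes f :: "complex \<Rightarrow> complex" and q \<alpha> :: real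
  assumes f: "f holomorphic_on UNIV" and q: "1 \<le> q" and alpha: "0 < \<alpha>"
    and N: "(\<integral>\<^sup>+ z. ennreal ((norm (f z) * exp (- (\<alpha> / 2) * (norm z)\<^sup>2)) powr q) \<partial>lborel) < \<infinity>"
  shows "(\<integral>\<^sup>+ z. ennreal ((norm (dilation_mean \<nu> f z) * exp (- (\<alpha> / 2) * (norm z)\<^sup>2)) powr q) \<partial>lborel) < \<infinity>"
proof -
  interpret finite_measure \<nu> by (rule finite_nu)
  have fc: "continuous_on UNIV f"
    using f by (rule holomorphic_on_imp_continuous_on)
  have [measurable]: "f \<in> borel_measurable borel"
    using fc by (rule borel_measurable_continuous_onI)
  obtain K where "K < \<infinity>"
    and K: "\<And>t. 1 \<le> t \<Longrightarrow> (\<integral>\<^sup>+ z. ennreal ((norm (f (z / of_real t)) * exp (- (\<alpha> / 2) * (norm z)\<^sup>2)) powr q) \<partial>lborel) \<le> K"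
    using Fock_integral_dilations_bounded[OF f q alpha N] by blast
  define c where "c = ennreal (measure \<nu> (space \<nu>) powr (q - 1))"
  define U where "U z t = indicator {1..} t * norm (f (z / of_real t)) * exp (- (\<alpha> / 2) * (norm z)\<^sup>2)" for z and t :: real
  have U_meas[measurable]: "(\<lambda>(z, t). ennreal (U z t powr q)) \<in> borel_measurable (lborel \<Otimes>\<^sub>M \<nu>)"
    unfolding U_def by measurable
  have dilations: "(\<integral>\<^sup>+ z. ennreal (U z t powr q) \<partial>lborel) \<le> K" for t
    using K[of t] by (cases "1 \<le> t") (simp_all add: U_def)
  have pair: "pair_sigma_finite lborel \<nu>"
    using finite_nu by (auto simp: pair_sigma_finite_def finite_measure_def sigma_finite_lborel)
  have "(\<integral>\<^sup>+ z. ennreal ((norm (dilation_mean \<nu> f z) * exp (- (\<alpha> / 2) * (norm z)\<^sup>2)) powr q) \<partial>lborel)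
      \<le> (\<integral>\<^sup>+ z. c * (\<integral>\<^sup>+ t. ennreal (U z t powr q) \<partial>\<nu>) \<partial>lborel)"
    unfolding c_def U_def by (intro nn_integral_mono powr_weighted_norm_dilation_mean_le fc q) simp
  also have "\<dots> = c * (\<integral>\<^sup>+ z. (\<integral>\<^sup>+ t. ennreal (U z t powr q) \<partial>\<nu>) \<partial>lborel)"
    by (rule nn_integral_cmult) measurable
  also have "\<dots> = c * (\<integral>\<^sup>+ t. (\<integral>\<^sup>+ z. ennreal (U z t powr q) \<partial>lborel) \<partial>\<nu>)"
    using pair_sigma_finite.Fubini'[OF pair U_meas] by simp
  also have "\<dots> \<le> c * (\<integral>\<^sup>+ t. K \<partial>\<nu>)"
    by (intro mult_left_mono nn_integral_mono dilations) simp
  also have "\<dots> < \<infinity>"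
    using \<open>K < \<infinity>\<close> by (simp add: c_def ennreal_mult_less_top emeasure_eq_measure)
  finally show ?thesis .
qed

lemma dilation_mean_in_Fock_space:
  fixes f :: "complex \<Rightarrow> complex" and a :: "nat \<Rightarrow> complex" and p :: ennreal and \<alpha> :: real
  assumes f: "f \<in> Fock_space p \<alpha>" and p: "1 \<le> p" and alpha: "0 < \<alpha>"
    and a: "\<And>z. (\<lambda>n. a n * z ^ n) sums f z"
  shows "dilation_mean \<nu> f \<in> Fock_space p \<alpha>"
proof (cases "p = \<infinity>")
  case True
  then obtain C where "\<And>z. norm (f z) * exp (- (\<alpha> / 2) * (norm z)\<^sup>2) \<le> C"
    using f by (auto simp: Fock_space_def)
  then have "norm (dilation_mean \<nu> f z) * exp (- (\<alpha> / 2) * (norm z)\<^sup>2) \<le> measure \<nu> (space \<nu>) * C" for z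
    using f alpha by (intro weighted_norm_dilation_mean_le holomorphic_on_imp_continuous_on) (auto simp: Fock_space_def)
  then show ?thesis
    using True holomorphic_dilation_mean[OF a] by (auto simp: Fock_space_def)
next
  case False
  define q where "q = enn2real p"
  have q: "1 \<le> q"
    using enn2real_mono[OF p] False by (simp add: q_def less_top)
  have fh: "f holomorphic_on UNIV"
    and "(\<integral>\<^sup>+ z. ennreal ((norm (f z) * exp (- (\<alpha> / 2) * (norm z)\<^sup>2)) powr q) \<partial>lborel) < \<infinity>"
    using f False by (simp_all add: Fock_space_def q_def)
  then have "(\<integral>\<^sup>+ z. ennreal ((norm (dilation_mean \<nu> f z) * exp (- (\<alpha> / 2) * (norm z)\<^sup>2)) powr q) \<partial>lborel) < \<infinity>"
    by (rule Fock_integral_dilation_mean_finite[OF _ q alpha])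
  then show ?thesis
    using False holomorphic_dilation_mean[OF a] by (simp add: Fock_space_def q_def)
qed

end

section \<open>The moment measure\<close>

definition moment_measure :: "real measure \<Rightarrow> real measure" where
  "moment_measure \<mu> = density (distr \<mu> borel (\<lambda>t. t)) (\<lambda>t. ennreal (1 / t) * indicator {1..} t)"

lemma sets_moment_measure [measurable_cong]: "sets (moment_measure \<mu>) = sets borel"
  by (simp add: moment_measure_def)

lemma nn_integral_moment_measure:
  assumes [measurable]: "(\<lambda>t. t) \<in> borel_measurable \<mu>" "h \<in> borel_measurable borel"
  shows "integral\<^sup>N (moment_measure \<mu>) h = (\<integral>\<^sup>+ t. ennreal (1 / t) * indicator {1..} t * h t \<partial>\<mu>)"
  unfolding moment_measure_def by (simp add: nn_integral_density nn_integral_distr)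

lemma moment_integrand_eq:
  fixes t :: real
  shows "ennreal (t powr (- real (n + 1))) * indicator {1..} t
    = ennreal (1 / t) * indicator {1..} t * ennreal (indicator {1..} t * (1 / t) ^ n)"
proof (cases "1 \<le> t")
  case True
  then have "0 < t" by simp
  then have "t powr (- real (n + 1)) = (1 / t) ^ (n + 1)"
    by (simp only: powr_minus powr_realpow) (simp add: power_one_over inverse_eq_divide)
  also have "\<dots> = 1 / t * (1 / t) ^ n"
    by (simp only: power_add power_one_right mult.commute)
  finally have pw: "t powr (- real (n + 1)) = 1 / t * (1 / t) ^ n" .
  have "0 \<le> 1 / t" "0 \<le> (1 / t) ^ n"
    using True by auto
  then show ?thesis
    unfolding pw ennreal_mult[OF \<open>0 \<le> 1 / t\<close> \<open>0 \<le> (1 / t) ^ n\<close>] using True by simp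
qed simp

lemma finite_measure_moment_measure:
  assumes "(\<lambda>t. t) \<in> borel_measurable \<mu>"
    and finite: "(\<integral>\<^sup>+ t. ennreal (t powr - 1) * indicator {1..} t \<partial>\<mu>) < \<infinity>"
  shows "finite_measure (moment_measure \<mu>)"
proof (rule finite_measureI)
  have "emeasure (moment_measure \<mu>) (space (moment_measure \<mu>)) = (\<integral>\<^sup>+ t. ennreal (1 / t) * indicator {1..} t \<partial>\<mu>)"
    using nn_integral_moment_measure[OF assms(1), of "\<lambda>_. 1"] by simp
  also have "\<dots> = (\<integral>\<^sup>+ t. ennreal (t powr - 1) * indicator {1..} t \<partial>\<mu>)"
    by (intro nn_integral_cong) (simp split: split_indicator)
  finally show "emeasure (moment_measure \<mu>) (space (moment_measure \<mu>)) \<noteq> \<infinity>"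
    using finite by simp
qed

lemma moment_seq_eq_integral:
  assumes "(\<lambda>t. t) \<in> borel_measurable \<mu>"
  shows "moment_seq \<mu> n = (\<integral> t. indicator {1..} t * (1 / t) ^ n \<partial>moment_measure \<mu>)"
proof -
  have "(\<integral> t. indicator {1..} t * (1 / t) ^ n \<partial>moment_measure \<mu>)
      = enn2real (\<integral>\<^sup>+ t. ennreal (indicator {1..} t * (1 / t) ^ n) \<partial>moment_measure \<mu>)"
    by (rule integral_eq_nn_integral) (auto split: split_indicator)
  also have "(\<integral>\<^sup>+ t. ennreal (indicator {1..} t * (1 / t) ^ n) \<partial>moment_measure \<mu>)
      = (\<integral>\<^sup>+ t. ennreal (t powr (- real (n + 1))) * indicator {1..} t \<partial>\<mu>)"
    unfolding moment_integrand_eq by (rule nn_integral_moment_measure[OF assms]) measurable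
  finally show ?thesis
    by (simp add: moment_seq_def)
qed

theorem mainTheorem2:
  fixes \<mu> :: "real measure" and p :: ennreal and \<alpha> :: real
    and f :: "complex \<Rightarrow> complex" and a :: "nat \<Rightarrow> complex"
  assumes space_mu: "space \<mu> = {0<..}"
    and sets_mu: "sets \<mu> = sets (restrict_space borel {0<..})"
    and null01: "emeasure \<mu> {0<..<1} = 0"
    and bounded: "(SUP n. \<integral>\<^sup>+ t. ennreal (t powr (- real (n + 1))) * indicator {1..} t \<partial>\<mu>) < \<infinity>"
    and p: "1 \<le> p"
    and alpha: "\<alpha> > 0"
    and f: "f \<in> Fock_space p \<alpha>"
    and a: "\<And>z. (\<lambda>n. a n * z ^ n) sums f z"
  shows "\<exists>g \<in> Fock_space p \<alpha>. \<forall>z. (\<lambda>n. complex_of_real (moment_seq \<mu> n) * a n * z ^ n) sums g z"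
proof -
  \<comment> \<open>The moments only see \<open>[1,\<infinity>)\<close>.\<close>
  have id_meas: "(\<lambda>t. t) \<in> borel_measurable \<mu>"
    unfolding measurable_cong_sets[OF sets_mu refl] by (intro measurable_restrict_space1) simp
  have fin: "finite_measure (moment_measure \<mu>)"
    using order.strict_trans1[OF SUP_upper[OF UNIV_I] bounded, of 0]
    by (intro finite_measure_moment_measure id_meas) simp
  have "dilation_mean (moment_measure \<mu>) f \<in> Fock_space p \<alpha>"
    using fin p alpha f a sets_moment_measure by (intro dilation_mean_in_Fock_space)
  moreover have "(\<lambda>n. complex_of_real (moment_seq \<mu> n) * a n * z ^ n) sums dilation_mean (moment_measure \<mu>) f z" for z
    using dilation_mean_sums[OF fin sets_moment_measure a] by (simp add: moment_seq_eq_integral[OF id_meas])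
  ultimately show ?thesis
    by blast
qed

end
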